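(* Let $V$ be a finite set with $|V|\ge2$, let $A$ be a real symmetric matrix indexed by $V$, and let $(X,Y)$ be a separation of $A$ such that for each $Z\in\{X,Y\}$ property (P) holds: for all $u\in Z\setminus(X\cap Y)$ and $s\in X\cap Y$, either $A_{su}>\min A$ or there exists a weighted chordless walk from $u$ to $s$ in $A[Z]$ internally vertex-disjoint from $X\cap Y$. Assume that every proper principal submatrix $A[U]$ ($U\subsetneq V$, $|U|\ge2$) satisfies (A) or (B), where for a matrix $B$ indexed by $U$: (A) means $B$ has a critical walk, and (B) means $B$ has two distinct simplicial vertices $u,v$ with $B_{uv}=\min B$. Then each $Z\in\{X,Y\}$ satisfies at least one of: (P1) $A[Z]$ has a simplicial vertex belonging to $Z\setminus(X\cap Y)$; (P2) there is a weighted chordless walk in $A[Z]$ which is rooted in $X\cap Y$.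
   Context: For a symmetric matrix $B$ indexed by $U$, $\min B=\min\{B_{xy}:x\ne y\in U\}$; $A[Z]$ is the principal submatrix indexed by $Z$. A separation of $A$ is a pair $(X,Y)$ of subsets of $V$ with $X\cup Y=V$, $X\setminus Y\ne\emptyset$, $Y\setminus X\neq\emptyset$ and $A_{xy}=\min A$ for all $x\in X\setminus Y$, $y\in Y\setminus X$. $v$ is simplicial in $B$ if $B_{yz}\ge\min\{B_{vy},B_{vz}\}$ for all distinct $y,z\in U\setminus\{v\}$. A walk is $W=(v_0,\dots,v_p)$ ($p\ge1$), from $v_0$ to $v_p$, with internal elements $I(W)=\{v_1,\dots,v_{p-1}\}$; it is closed if $v_0=v_p$; internally vertex-disjoint from $S$ if $I(W)\cap S=\emptyset$. $W$ is weighted chordless in $B$ if $B_{v_{i-1}v_{i+1}}<\min\{B_{v_{i-1}v_i},B_{v_{i+1}v_i}\}$ for $1\le i\le p-1$. A critical walk of $B$ is a closed weighted chordless walk in $B$ whose end point $v_0$ is simplicial in $B$ and for which some $u\in I(W)$ has $B_{v_0u}=\min B$. A walk is rooted in $S$ if its end points belong to $S$, its internal elements belong to the complement of $S$, and $I(W)\ne\emptyset$. *)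

theory Defs
  imports Complex_Main
begin

text \<open>A symmetric matrix indexed by a set U is represented by a function
  B :: 'a => 'a => real together with the index set U. The principal submatrix
  A[Z] is represented by the same function A with index set Z.\<close>

definition minmat :: "('a \<Rightarrow> 'a \<Rightarrow> real) \<Rightarrow> 'a set \<Rightarrow> real" where
  "minmat B U = Min {B x y | x y. x \<in> U \<and> y \<in> U \<and> x \<noteq> y}"

definition separation :: "('a \<Rightarrow> 'a \<Rightarrow> real) \<Rightarrow> 'a set \<Rightarrow> 'a set \<Rightarrow> 'a set \<Rightarrow> bool" where
  "separation A V X Y \<longleftrightarrow> X \<subseteq> V \<and> Y \<subseteq> V \<and> X \<union> Y = V \<and> X - Y \<noteq> {} \<and> Y - X \<noteq> {} \<and>
     (\<forall>x \<in> X - Y. \<forall>y \<in> Y - X. A x y = minmat A V)"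

definition simplicial :: "('a \<Rightarrow> 'a \<Rightarrow> real) \<Rightarrow> 'a set \<Rightarrow> 'a \<Rightarrow> bool" where
  "simplicial B U v \<longleftrightarrow> v \<in> U \<and>
     (\<forall>y \<in> U - {v}. \<forall>z \<in> U - {v}. y \<noteq> z \<longrightarrow> B y z \<ge> min (B v y) (B v z))"

definition walk_in :: "'a set \<Rightarrow> 'a list \<Rightarrow> bool" where
  "walk_in U W \<longleftrightarrow> length W \<ge> 2 \<and> set W \<subseteq> U"

definition internal :: "'a list \<Rightarrow> 'a set" where
  "internal W = set (butlast (tl W))"

definition closed_walk :: "'a list \<Rightarrow> bool" where
  "closed_walk W \<longleftrightarrow> hd W = last W"

definition weighted_chordless :: "('a \<Rightarrow> 'a \<Rightarrow> real) \<Rightarrow> 'a set \<Rightarrow> 'a list \<Rightarrow> bool" where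
  "weighted_chordless B U W \<longleftrightarrow> walk_in U W \<and>
     (\<forall>i. 1 \<le> i \<and> i < length W - 1 \<longrightarrow>
        B (W ! (i - 1)) (W ! (i + 1)) < min (B (W ! (i - 1)) (W ! i)) (B (W ! (i + 1)) (W ! i)))"

definition critical_walk :: "('a \<Rightarrow> 'a \<Rightarrow> real) \<Rightarrow> 'a set \<Rightarrow> 'a list \<Rightarrow> bool" where
  "critical_walk B U W \<longleftrightarrow> weighted_chordless B U W \<and> closed_walk W \<and>
     simplicial B U (hd W) \<and> (\<exists>u \<in> internal W. B (hd W) u = minmat B U)"

definition rooted_in :: "'a set \<Rightarrow> 'a set \<Rightarrow> 'a list \<Rightarrow> bool" where
  "rooted_in U S W \<longleftrightarrow> hd W \<in> S \<and> last W \<in> S \<and> internal W \<subseteq> U - S \<and> internal W \<noteq> {}"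

definition propA :: "('a \<Rightarrow> 'a \<Rightarrow> real) \<Rightarrow> 'a set \<Rightarrow> bool" where
  "propA B U \<longleftrightarrow> (\<exists>W. critical_walk B U W)"

definition propB :: "('a \<Rightarrow> 'a \<Rightarrow> real) \<Rightarrow> 'a set \<Rightarrow> bool" where
  "propB B U \<longleftrightarrow> (\<exists>u v. u \<noteq> v \<and> simplicial B U u \<and> simplicial B U v \<and> B u v = minmat B U)"

definition propP :: "('a \<Rightarrow> 'a \<Rightarrow> real) \<Rightarrow> 'a set \<Rightarrow> 'a set \<Rightarrow> 'a set \<Rightarrow> 'a set \<Rightarrow> bool" where
  "propP A V X Y Z \<longleftrightarrow> (\<forall>u \<in> Z - (X \<inter> Y). \<forall>s \<in> X \<inter> Y.
     A s u > minmat A V \<or>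
     (\<exists>W. weighted_chordless A Z W \<and> hd W = u \<and> last W = s \<and> internal W \<inter> (X \<inter> Y) = {}))"

end

theory Submission
  imports Defs
begin

text \<open>Let m = min A[Z],
  let C be the component of some w \<in> Z - S in the graph on Z - S whose edges have weight > m,
  and let N be the set of roots s \<in> S with an edge of weight > m to C. If U = C \<union> N is smaller
  than Z, the induction hypothesis for (U, N) yields either a walk rooted in N, which is rooted
  in S, or a simplicial vertex of A[U] in C, which stays simplicial in A[Z] because its entries
  towards Z - U all equal m. If U = Z, any two roots s, t with A s t = m are joined through C by
  a walk of weights > m, and removing chords from it yields a chordless walk rooted in S. Now
  (B) for A[Z] gives a simplicial vertex outside S or such a pair of roots, and so does (A),
  unless the critical walk leaves S, in which case one of its segments is itself rooted in S.\<close>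

text \<open>Chordlessness phrased through infixes rather than indices, so that it passes to
  subwalks.\<close>
definition chord_free :: "('a \<Rightarrow> 'a \<Rightarrow> real) \<Rightarrow> 'a list \<Rightarrow> bool" where
  "chord_free A W \<longleftrightarrow> (\<forall>xs a b c ys. W = xs @ [a, b, c] @ ys \<longrightarrow> A a c < min (A a b) (A c b))"

lemma list_split_at_triple:
  assumes "1 \<le> i" "i < length W - 1"
  shows "W = take (i - 1) W @ [W ! (i - 1), W ! i, W ! (i + 1)] @ drop (i + 2) W"
proof -
  have "drop (i - 1) W = W ! (i - 1) # drop i W"
    using assms Cons_nth_drop_Suc[of "i - 1" W] by simp
  also have "\<dots> = [W ! (i - 1), W ! i, W ! (i + 1)] @ drop (i + 2) W"
    using assms by (simp add: Cons_nth_drop_Suc)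
  finally have "drop (i - 1) W = [W ! (i - 1), W ! i, W ! (i + 1)] @ drop (i + 2) W" .
  then show ?thesis
    by (metis append_take_drop_id)
qed

lemma weighted_chordless_iff_chord_free:
  "weighted_chordless A U W \<longleftrightarrow> walk_in U W \<and> chord_free A W"
proof -
  have "chord_free A W \<longleftrightarrow> (\<forall>i. 1 \<le> i \<and> i < length W - 1 \<longrightarrow>
      A (W ! (i - 1)) (W ! (i + 1)) < min (A (W ! (i - 1)) (W ! i)) (A (W ! (i + 1)) (W ! i)))"
  proof
    assume "chord_free A W"
    then show "\<forall>i. 1 \<le> i \<and> i < length W - 1 \<longrightarrow> A (W ! (i - 1)) (W ! (i + 1)) <
        min (A (W ! (i - 1)) (W ! i)) (A (W ! (i + 1)) (W ! i))"
      unfolding chord_free_def by (metis list_split_at_triple)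
  next
    assume chordless: "\<forall>i. 1 \<le> i \<and> i < length W - 1 \<longrightarrow> A (W ! (i - 1)) (W ! (i + 1)) <
        min (A (W ! (i - 1)) (W ! i)) (A (W ! (i + 1)) (W ! i))"
    show "chord_free A W" unfolding chord_free_def
    proof (intro allI impI)
      fix xs a b c ys assume W: "W = xs @ [a, b, c] @ ys"
      have "1 \<le> Suc (length xs)" "Suc (length xs) < length W - 1"
        using W by auto
      with chordless W show "A a c < min (A a b) (A c b)"
        by (fastforce simp: nth_append)
    qed
  qed
  then show ?thesis
    unfolding weighted_chordless_def by simp
qed

lemma chord_free_infix: "chord_free A (xs @ W @ ys) \<Longrightarrow> chord_free A W"
  unfolding chord_free_def by (metis append.assoc)

lemma weighted_chordless_mono:
  "weighted_chordless A U W \<Longrightarrow> U \<subseteq> Z \<Longrightarrow> weighted_chordless A Z W"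
  unfolding weighted_chordless_def walk_in_def by auto

lemma rooted_in_mono:
  "rooted_in U N W \<Longrightarrow> N \<subseteq> S \<Longrightarrow> U - N \<subseteq> Z - S \<Longrightarrow> rooted_in Z S W"
  unfolding rooted_in_def by auto

lemma internal_subset_set: "internal W \<subseteq> set W"
  unfolding internal_def by (cases W) (auto dest: in_set_butlastD)

lemma internal_delete_middle:
  "internal (xs @ [a, c] @ ys) \<subseteq> internal (xs @ [a, b, c] @ ys)"
  unfolding internal_def
  by (cases xs; cases ys rule: rev_cases) (auto simp: butlast_append)

text \<open>Chords are removed one vertex at a time; the weight of a chord exceeds m because it is
  not below both weights it replaces.\<close>
lemma rooted_walk_of_heavy_walk:
  assumes sym: "\<forall>x\<in>Z. \<forall>y\<in>Z. A x y = A y x"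
  shows "successively (\<lambda>a b. m < A a b) Q \<Longrightarrow> set Q \<subseteq> Z \<Longrightarrow> length Q \<ge> 2 \<Longrightarrow>
    hd Q \<in> S \<Longrightarrow> last Q \<in> S \<Longrightarrow> internal Q \<subseteq> Z - S \<Longrightarrow> A (hd Q) (last Q) \<le> m \<Longrightarrow>
    \<exists>W. weighted_chordless A Z W \<and> rooted_in Z S W"
proof (induction "length Q" arbitrary: Q rule: less_induct)
  case less
  show ?case
  proof (cases "chord_free A Q")
    case True
    have "internal Q \<noteq> {}"
    proof
      assume "internal Q = {}"
      then have "length (butlast (tl Q)) = 0"
        unfolding internal_def by simp
      with \<open>length Q \<ge> 2\<close> have "length Q = 2"
        by simp
      then obtain a b where "Q = [a, b]"
        by (metis (no_types) One_nat_def Suc_1 length_0_conv length_Suc_conv)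
      with less.prems(1,7) show False by simp
    qed
    with True less.prems show ?thesis
      unfolding weighted_chordless_iff_chord_free walk_in_def rooted_in_def by blast
  next
    case False
    then obtain xs a b c ys where Q: "Q = xs @ [a, b, c] @ ys"
      and chord: "\<not> A a c < min (A a b) (A c b)"
      unfolding chord_free_def by blast
    have "m < A a b" "m < A b c" "A c b = A b c"
      using less.prems(1,2) sym unfolding Q by (auto simp: successively_append_iff)
    with chord have "m < A a c" by linarith
    define Q' where "Q' = xs @ [a, c] @ ys"
    have "length Q' < length Q" "length Q' \<ge> 2" "set Q' \<subseteq> Z"
      "hd Q' = hd Q" "last Q' = last Q"
      using less.prems(2) unfolding Q Q'_def by (auto simp: hd_append)
    moreover have "successively (\<lambda>a b. m < A a b) Q'"
      using less.prems(1) \<open>m < A a c\<close> unfolding Q Q'_def by (auto simp: successively_append_iff)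
    moreover have "internal Q' \<subseteq> Z - S"
      using less.prems(6) internal_delete_middle[of xs a c ys b] unfolding Q Q'_def by blast
    ultimately show ?thesis
      using less.hyps less.prems(4,5,7) by metis
  qed
qed

lemma rooted_walk_of_chord_free:
  "chord_free A W \<Longrightarrow> set W \<subseteq> Z \<Longrightarrow> hd W \<in> S \<Longrightarrow> last W \<in> S \<Longrightarrow> x \<in> set W \<Longrightarrow> x \<notin> S \<Longrightarrow>
   \<exists>W'. weighted_chordless A Z W' \<and> rooted_in Z S W'"
proof (induction W)
  case Nil
  then show ?case by simp
next
  case (Cons a rest)
  have "rest \<noteq> []" "a \<in> S"
    using Cons.prems(3,5,6) by auto
  define p where "p = takeWhile (\<lambda>y. y \<notin> S) rest"
  define q where "q = dropWhile (\<lambda>y. y \<notin> S) rest"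
  have rest: "rest = p @ q" and p_outside: "set p \<inter> S = {}"
    unfolding p_def q_def by (auto dest: set_takeWhileD)
  have "q \<noteq> []"
    using Cons.prems(4) \<open>rest \<noteq> []\<close> p_outside rest by (metis Int_iff append.right_neutral
        empty_iff last_ConsR last_in_set)
  moreover have "hd q \<in> S"
    using hd_dropWhile[of "\<lambda>y. y \<notin> S" rest] \<open>q \<noteq> []\<close> unfolding q_def by simp
  ultimately obtain b q' where q: "q = b # q'" and "b \<in> S"
    by (cases q) auto
  show ?case
  proof (cases "p = []")
    case True
    then show ?thesis
      using Cons.IH Cons.prems chord_free_infix[of A "[a]" rest "[]"] \<open>rest \<noteq> []\<close> \<open>b \<in> S\<close>
        rest q by auto
  next
    case False
    define W' where "W' = a # p @ [b]"
    have "chord_free A W'"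
      using Cons.prems(1) chord_free_infix[of A "[]" W' q'] rest q unfolding W'_def by simp
    moreover have "internal W' = set p"
      unfolding W'_def internal_def by simp
    ultimately have "weighted_chordless A Z W' \<and> rooted_in Z S W'"
      using Cons.prems(2) False p_outside \<open>a \<in> S\<close> \<open>b \<in> S\<close> rest q
      unfolding weighted_chordless_iff_chord_free walk_in_def rooted_in_def W'_def by auto
    then show ?thesis by blast
  qed
qed

lemma rtranclp_imp_chain:
  assumes "R\<^sup>*\<^sup>* x y"
  shows "\<exists>P. P \<noteq> [] \<and> hd P = x \<and> last P = y \<and> set P \<subseteq> {z. R\<^sup>*\<^sup>* x z} \<and> successively R P"
  using assms
proof (induction rule: rtranclp_induct)
  case base
  show ?case by (intro exI[of _ "[x]"]) simp
next
  case (step y z)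
  then obtain P where "P \<noteq> []" "hd P = x" "last P = y" "set P \<subseteq> {z. R\<^sup>*\<^sup>* x z}" "successively R P"
    by blast
  with step show ?case
    by (intro exI[of _ "P @ [z]"]) (auto simp: successively_append_iff)
qed

definition heavy_component :: "('a \<Rightarrow> 'a \<Rightarrow> real) \<Rightarrow> real \<Rightarrow> 'a set \<Rightarrow> 'a \<Rightarrow> 'a set" where
  "heavy_component A m T w = {y. (\<lambda>x y. x \<in> T \<and> y \<in> T \<and> m < A x y)\<^sup>*\<^sup>* w y}"

lemma heavy_component_self: "w \<in> heavy_component A m T w"
  unfolding heavy_component_def by simp

lemma heavy_component_subset:
  assumes "w \<in> T"
  shows "heavy_component A m T w \<subseteq> T"
proof
  fix y assume "y \<in> heavy_component A m T w"
  then have "(\<lambda>x y. x \<in> T \<and> y \<in> T \<and> m < A x y)\<^sup>*\<^sup>* w y"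
    unfolding heavy_component_def by simp
  then show "y \<in> T"
    using assms by (cases rule: rtranclp.cases) auto
qed

lemma heavy_component_closed:
  assumes "w \<in> T" "c \<in> heavy_component A m T w" "y \<in> T" "m < A c y"
  shows "y \<in> heavy_component A m T w"
  using assms heavy_component_subset[OF assms(1)]
  unfolding heavy_component_def by (auto intro: rtranclp.rtrancl_into_rtrancl)

lemma heavy_component_connected:
  assumes sym: "\<forall>x\<in>T. \<forall>y\<in>T. A x y = A y x"
    and "c \<in> heavy_component A m T w" "c' \<in> heavy_component A m T w"
  shows "\<exists>P. P \<noteq> [] \<and> hd P = c \<and> last P = c' \<and> set P \<subseteq> heavy_component A m T w \<and>
    successively (\<lambda>a b. m < A a b) P"
proof -
  define E where "E = (\<lambda>x y. x \<in> T \<and> y \<in> T \<and> m < A x y)"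
  have "symp E"
    using sym unfolding E_def symp_def by auto
  have wc: "E\<^sup>*\<^sup>* w c" "E\<^sup>*\<^sup>* w c'"
    using assms(2,3) unfolding heavy_component_def E_def by simp_all
  have "E\<^sup>*\<^sup>* c c'"
    using sympD[OF symp_rtranclp[OF \<open>symp E\<close>] wc(1)] wc(2) by (rule rtranclp_trans)
  then obtain P where "P \<noteq> []" "hd P = c" "last P = c'" "set P \<subseteq> {z. E\<^sup>*\<^sup>* c z}"
    "successively E P"
    using rtranclp_imp_chain by metis
  moreover have "{z. E\<^sup>*\<^sup>* c z} \<subseteq> heavy_component A m T w"
    using wc(1) unfolding heavy_component_def E_def[symmetric] by auto
  moreover have "successively (\<lambda>a b. m < A a b) P"
    using \<open>successively E P\<close> by (rule successively_mono) (simp add: E_def)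
  ultimately show ?thesis
    by blast
qed

lemma minmat_le:
  assumes "finite Z" "x \<in> Z" "y \<in> Z" "x \<noteq> y"
  shows "minmat A Z \<le> A x y"
proof -
  have "{A x y | x y. x \<in> Z \<and> y \<in> Z \<and> x \<noteq> y} \<subseteq> case_prod A ` (Z \<times> Z)"
    by auto
  then have "finite {A x y | x y. x \<in> Z \<and> y \<in> Z \<and> x \<noteq> y}"
    using assms(1) finite_subset by blast
  then show ?thesis
    unfolding minmat_def using assms by (intro Min_le) auto
qed

lemma simplicial_extend:
  assumes "finite Z" "U \<subseteq> Z" "simplicial A U v" "\<forall>y \<in> Z - U. A v y \<le> minmat A Z"
  shows "simplicial A Z v"
  unfolding simplicial_def
proof (intro conjI ballI impI)
  show "v \<in> Z" using assms(2,3) unfolding simplicial_def by auto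
  fix y z assume y: "y \<in> Z - {v}" and z: "z \<in> Z - {v}" and "y \<noteq> z"
  show "min (A v y) (A v z) \<le> A y z"
  proof (cases "y \<in> U \<and> z \<in> U")
    case True
    then have "y \<in> U - {v}" "z \<in> U - {v}"
      using y z by auto
    with assms(3) \<open>y \<noteq> z\<close> show ?thesis
      unfolding simplicial_def by blast
  next
    case False
    then have "y \<in> Z - U \<or> z \<in> Z - U"
      using y z by blast
    then have "min (A v y) (A v z) \<le> minmat A Z"
      using assms(4) min.coboundedI1 min.coboundedI2 by blast
    also have "\<dots> \<le> A y z"
      using assms(1) y z \<open>y \<noteq> z\<close> by (intro minmat_le) auto
    finally show ?thesis .
  qed
qed

lemma rooted_walk_through_heavy_component:
  assumes sym: "\<forall>x\<in>Z. \<forall>y\<in>Z. A x y = A y x" and "C \<subseteq> Z - S"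
    and connected: "\<And>c c'. c \<in> C \<Longrightarrow> c' \<in> C \<Longrightarrow>
      \<exists>P. P \<noteq> [] \<and> hd P = c \<and> last P = c' \<and> set P \<subseteq> C \<and> successively (\<lambda>a b. m < A a b) P"
    and attached: "\<And>s. s \<in> S \<Longrightarrow> \<exists>c\<in>C. m < A c s"
    and "s \<in> S" "t \<in> S" "S \<subseteq> Z" "A s t \<le> m"
  shows "\<exists>W. weighted_chordless A Z W \<and> rooted_in Z S W"
proof -
  obtain c c' where "c \<in> C" "m < A c s" "c' \<in> C" "m < A c' t"
    using attached \<open>s \<in> S\<close> \<open>t \<in> S\<close> by blast
  moreover obtain P where P: "P \<noteq> []" "hd P = c" "last P = c'" "set P \<subseteq> C"
    "successively (\<lambda>a b. m < A a b) P"
    using connected \<open>c \<in> C\<close> \<open>c' \<in> C\<close> by blast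
  moreover have "A s c = A c s"
    using sym \<open>c \<in> C\<close> \<open>s \<in> S\<close> \<open>C \<subseteq> Z - S\<close> \<open>S \<subseteq> Z\<close> by (metis DiffD1 subsetD)
  ultimately have "successively (\<lambda>a b. m < A a b) (s # (P @ [t]))"
    by (simp add: successively_Cons successively_append_iff hd_append)
  moreover have "internal (s # P @ [t]) \<subseteq> Z - S" "set (s # P @ [t]) \<subseteq> Z"
    using P(4) assms(2,5,6,7) unfolding internal_def by auto
  ultimately show ?thesis
    using rooted_walk_of_heavy_walk[OF sym, of m "s # P @ [t]" S] assms(5,6,8) by simp
qed

lemma simplicial_or_rooted_walk_if_roots_joined:
  assumes "propA A Z \<or> propB A Z"
    and joined: "\<And>s t. s \<in> S \<Longrightarrow> t \<in> S \<Longrightarrow> A s t = minmat A Z \<Longrightarrow>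
      \<exists>W. weighted_chordless A Z W \<and> rooted_in Z S W"
  shows "(\<exists>v\<in>Z - S. simplicial A Z v) \<or> (\<exists>W. weighted_chordless A Z W \<and> rooted_in Z S W)"
  using assms(1)
proof
  assume "propB A Z"
  then obtain u v where uv: "simplicial A Z u" "simplicial A Z v" "A u v = minmat A Z"
    unfolding propB_def by blast
  then have "u \<in> Z" "v \<in> Z"
    unfolding simplicial_def by auto
  with uv joined show ?thesis
    by (cases "u \<in> S"; cases "v \<in> S") auto
next
  assume "propA A Z"
  then obtain W u where W: "weighted_chordless A Z W" "hd W = last W" "simplicial A Z (hd W)"
    and u: "u \<in> internal W" "A (hd W) u = minmat A Z"
    unfolding propA_def critical_walk_def closed_walk_def by blast
  have "chord_free A W" "set W \<subseteq> Z"
    using W(1) unfolding weighted_chordless_iff_chord_free walk_in_def by auto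
  have "u \<in> set W"
    using subsetD[OF internal_subset_set u(1)] .
  consider "hd W \<notin> S" | "hd W \<in> S" "u \<in> S" | "hd W \<in> S" "u \<notin> S"
    by blast
  then show ?thesis
  proof cases
    case 1
    with W(3) show ?thesis unfolding simplicial_def by blast
  next
    case 2
    with joined u(2) show ?thesis by blast
  next
    case 3
    with rooted_walk_of_chord_free[of A W Z S u] W(2) show ?thesis
      using \<open>chord_free A W\<close> \<open>set W \<subseteq> Z\<close> \<open>u \<in> set W\<close> by simp
  qed
qed

lemma simplicial_or_rooted_walk:
  assumes "finite Z" "\<forall>x\<in>Z. \<forall>y\<in>Z. A x y = A y x"
    and "\<forall>U. U \<subseteq> Z \<and> card U \<ge> 2 \<longrightarrow> propA A U \<or> propB A U"
    and "S \<subseteq> Z" "Z - S \<noteq> {}"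
  shows "(\<exists>v\<in>Z - S. simplicial A Z v) \<or> (\<exists>W. weighted_chordless A Z W \<and> rooted_in Z S W)"
  using assms
proof (induction "card Z" arbitrary: Z S rule: less_induct)
  case less
  note fin = less.prems(1) and sym = less.prems(2) and AB = less.prems(3) and SZ = less.prems(4)
  obtain w where w: "w \<in> Z - S"
    using less.prems(5) by blast
  show ?case
  proof (cases "card Z \<ge> 2")
    case False
    then have "Z - {w} = {}"
      using w card_le_Suc0_iff_eq[OF fin] by auto
    then have "simplicial A Z w"
      using w unfolding simplicial_def by blast
    with w show ?thesis by blast
  next
    case True
    define m where "m = minmat A Z"
    define C where "C = heavy_component A m (Z - S) w"
    define N where "N = {s \<in> S. \<exists>c\<in>C. m < A c s}"
    have CT: "C \<subseteq> Z - S"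
      unfolding C_def using w by (rule heavy_component_subset)
    have "w \<in> C"
      unfolding C_def by (rule heavy_component_self)
    have "N \<subseteq> S"
      unfolding N_def by auto
    show ?thesis
    proof (cases "C \<union> N = Z")
      case True
      have attached: "\<exists>c\<in>C. m < A c s" if "s \<in> S" for s
        using that SZ CT True unfolding N_def by blast
      have connected: "\<exists>P. P \<noteq> [] \<and> hd P = c \<and> last P = c' \<and> set P \<subseteq> C \<and>
          successively (\<lambda>a b. m < A a b) P" if "c \<in> C" "c' \<in> C" for c c'
        using heavy_component_connected[of "Z - S" A] sym that unfolding C_def by blast
      have "propA A Z \<or> propB A Z"
        using AB \<open>card Z \<ge> 2\<close> by blast
      then show ?thesis
      proof (rule simplicial_or_rooted_walk_if_roots_joined)
        fix s t assume "s \<in> S" "t \<in> S" "A s t = minmat A Z"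
        then show "\<exists>W. weighted_chordless A Z W \<and> rooted_in Z S W"
          using rooted_walk_through_heavy_component[OF sym CT connected attached] SZ
          unfolding m_def by simp
      qed
    next
      case False
      define U where "U = C \<union> N"
      have "U \<subseteq> Z" "U - N = C"
        unfolding U_def using CT SZ \<open>N \<subseteq> S\<close> by auto
      with False have "card U < card Z"
        using fin unfolding U_def by (simp add: psubset_card_mono psubset_eq)
      moreover have "finite U"
        using fin \<open>U \<subseteq> Z\<close> by (rule finite_subset[rotated])
      moreover have "\<forall>x\<in>U. \<forall>y\<in>U. A x y = A y x" "\<forall>U'. U' \<subseteq> U \<and> 2 \<le> card U' \<longrightarrow> propA A U' \<or> propB A U'"
        using sym AB \<open>U \<subseteq> Z\<close> by blast+
      moreover have "N \<subseteq> U" "U - N \<noteq> {}"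
        unfolding U_def using \<open>U - N = C\<close> \<open>w \<in> C\<close> by (auto simp: U_def)
      ultimately have "(\<exists>v\<in>U - N. simplicial A U v) \<or> (\<exists>W. weighted_chordless A U W \<and> rooted_in U N W)"
        by (rule less.hyps)
      then show ?thesis
      proof (elim disjE bexE exE conjE)
        fix v assume "v \<in> U - N" "simplicial A U v"
        have "v \<in> C"
          using \<open>v \<in> U - N\<close> \<open>U - N = C\<close> by blast
        have "A v y \<le> m" if "y \<in> Z - U" for y
        proof (rule ccontr)
          assume "\<not> A v y \<le> m"
          then have "m < A v y"
            by simp
          moreover have "y \<notin> C" "y \<notin> N"
            using that unfolding U_def by blast+
          ultimately show False
            using that heavy_component_closed[OF w, of v A m y] \<open>v \<in> C\<close>
            unfolding N_def C_def by blast
        qed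
        then have "simplicial A Z v"
          using simplicial_extend[OF fin \<open>U \<subseteq> Z\<close> \<open>simplicial A U v\<close>] unfolding m_def by blast
        with \<open>v \<in> C\<close> CT show ?thesis
          by blast
      next
        fix W assume "weighted_chordless A U W" "rooted_in U N W"
        moreover have "U - N \<subseteq> Z - S"
          using \<open>U - N = C\<close> CT by simp
        ultimately show ?thesis
          using weighted_chordless_mono[OF _ \<open>U \<subseteq> Z\<close>] rooted_in_mono[OF _ \<open>N \<subseteq> S\<close>] by blast
      qed
    qed
  qed
qed

theorem lemma9:
  fixes A :: "'a \<Rightarrow> 'a \<Rightarrow> real" and V X Y :: "'a set"
  assumes "finite V" and "card V \<ge> 2"
    and "\<forall>x \<in> V. \<forall>y \<in> V. A x y = A y x"
    and "separation A V X Y"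
    and "\<forall>Z \<in> {X, Y}. propP A V X Y Z"
    and "\<forall>U. U \<subset> V \<and> card U \<ge> 2 \<longrightarrow> propA A U \<or> propB A U"
  shows "\<forall>Z \<in> {X, Y}. (\<exists>v \<in> Z - (X \<inter> Y). simplicial A Z v) \<or>
           (\<exists>W. weighted_chordless A Z W \<and> rooted_in Z (X \<inter> Y) W)"
proof
  fix Z assume "Z \<in> {X, Y}"
  moreover have "X \<subseteq> V" "Y \<subseteq> V" "X - Y \<noteq> {}" "Y - X \<noteq> {}"
    using assms(4) unfolding separation_def by auto
  ultimately have "Z \<subset> V" "X \<inter> Y \<subseteq> Z" "Z - X \<inter> Y \<noteq> {}"
    by auto
  moreover have "finite Z"
    using assms(1) \<open>Z \<subset> V\<close> by (meson finite_subset psubset_imp_subset)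
  moreover have "\<forall>x\<in>Z. \<forall>y\<in>Z. A x y = A y x"
    using assms(3) \<open>Z \<subset> V\<close> by blast
  moreover have "\<forall>U. U \<subseteq> Z \<and> card U \<ge> 2 \<longrightarrow> propA A U \<or> propB A U"
    using assms(6) \<open>Z \<subset> V\<close> by (meson subset_psubset_trans)
  ultimately show "(\<exists>v \<in> Z - (X \<inter> Y). simplicial A Z v) \<or>
      (\<exists>W. weighted_chordless A Z W \<and> rooted_in Z (X \<inter> Y) W)"
    using simplicial_or_rooted_walk by blast
qed

end
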